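(* In the setting described in the context, for each $i=2,\dots,h-1$, writing $\min D_i=a_i x^{\nu_{i,0}}\bar f_1^{\nu_{i,1}}\cdots\bar f_{i-1}^{\nu_{i,i-1}}$ with $a_i\in k^*$, $\nu_{i,0}\ge 0$ and $0\le \nu_{i,j}<p^{n_j}$ for $j\ge1$, the lower jumps satisfy $$b_i=\nu_{i,0}\,p^{n_1+\cdots+n_{i-1}}+\sum_{j=1}^{i-1}\nu_{i,j}\,p^{n_{j+1}+\cdots+n_{i-1}}\,b_j .$$
   Context: Let $k$ be an algebraically closed field of characteristic $p\ge 5$. Let $\pi:X\to\mathbb{P}^1$ be a Galois cover of curves over $k$ with function field $F\supset k(x)$ and Galois group $G$, such that the only ramified point of $\mathbb{P}^1$ is $P_\infty$ (the pole of $x$), which is totally and wildly ramified, and $G$ is a $p$-group equal to its first ramification group. Let $P$ be the unique point of $X$ over $P_\infty$ and $v$ the valuation of $F$ at $P$; thus $v(x)=-|G|$. Let $b_1<\dots<b_{h-1}$ be the jumps of the lower ramification filtration $G_i=\{\sigma: v(\sigma(t)-t)\ge i+1\}$ ($t$ a uniformizer at $P$), with $G_{b_h}=1$ and $[G_{b_i}:G_{b_{i+1}}]=p^{n_i}$, so $|G|=p^{n_1+\cdots+n_{h-1}}$. Let $F_i=F^{G_{b_i}}$, $F_1=k(x)$. There are $\bar f_i\in F_{i+1}$ with $F_{i+1}=F_i(\bar f_i)$, only pole at $P$, $v(\bar f_i)=-\bar m_i$ with $\bar m_i=p^{n_{i+1}+\cdots+n_{h-1}}b_i$, and minimal polynomial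 over $F_i$ equal to $X^{p^{n_i}}+a^{(i)}_{n_i-1}X^{p^{n_i-1}}+\cdots+a^{(i)}_0X-D_i$ with $a^{(i)}_j\in k$, $D_i\in F_i$. Each $D_i$ is a finite sum $\sum\gamma x^{\ell_0}\bar f_1^{\ell_1}\cdots\bar f_{i-1}^{\ell_{i-1}}$ ($\gamma\in k$, $\ell_0\ge0$, $0\le\ell_j<p^{n_j}$) in which distinct monomials have distinct valuations; $\min D_i$ is the summand of smallest valuation, so $v(\min D_i)=v(D_i)$. *)

theory Defs
  imports "HOL-Computational_Algebra.Polynomial"
begin

text \<open>The function field F is modelled as the whole type 'a (a field).
  Valuations are integer-valued functions; their value at 0 is irrelevant
  (morally +infinity) and is never used.\<close>

definition subfield :: "'a::field set \<Rightarrow> bool" where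
  "subfield L \<longleftrightarrow> 0 \<in> L \<and> 1 \<in> L \<and>
     (\<forall>a\<in>L. \<forall>b\<in>L. a + b \<in> L \<and> a * b \<in> L) \<and>
     (\<forall>a\<in>L. - a \<in> L \<and> inverse a \<in> L)"

definition gen_field :: "'a::field set \<Rightarrow> 'a set" where
  "gen_field A = \<Inter> {L. subfield L \<and> A \<subseteq> L}"

definition poly_over :: "'a::field set \<Rightarrow> 'a poly \<Rightarrow> bool" where
  "poly_over L q \<longleftrightarrow> (\<forall>m. coeff q m \<in> L)"

definition alg_closed_subfield :: "'a::field set \<Rightarrow> bool" where
  "alg_closed_subfield k \<longleftrightarrow> subfield k \<and>
     (\<forall>q. poly_over k q \<and> degree q > 0 \<longrightarrow> (\<exists>r\<in>k. poly q r = 0))"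

definition transcendental_over :: "'a::field set \<Rightarrow> 'a \<Rightarrow> bool" where
  "transcendental_over k x \<longleftrightarrow> (\<forall>q. poly_over k q \<and> q \<noteq> 0 \<longrightarrow> poly q x \<noteq> 0)"

definition field_aut :: "('a::field \<Rightarrow> 'a) \<Rightarrow> bool" where
  "field_aut \<sigma> \<longleftrightarrow> bij \<sigma> \<and> (\<forall>a b. \<sigma> (a + b) = \<sigma> a + \<sigma> b \<and> \<sigma> (a * b) = \<sigma> a * \<sigma> b)"

definition fixed_field :: "('a::field \<Rightarrow> 'a) set \<Rightarrow> 'a set" where
  "fixed_field H = {a. \<forall>\<sigma>\<in>H. \<sigma> a = a}"

definition aut_group :: "('a::field \<Rightarrow> 'a) set \<Rightarrow> bool" where
  "aut_group G \<longleftrightarrow> finite G \<and> id \<in> G \<and> (\<forall>\<sigma>\<in>G. field_aut \<sigma>) \<and>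
     (\<forall>\<sigma>\<in>G. \<forall>\<tau>\<in>G. \<sigma> \<circ> \<tau> \<in> G) \<and> (\<forall>\<sigma>\<in>G. inv \<sigma> \<in> G)"

text \<open>A place of F/k, given by its normalized discrete valuation
  (surjective onto Z, trivial on k).\<close>
definition place :: "'a::field set \<Rightarrow> ('a \<Rightarrow> int) \<Rightarrow> bool" where
  "place k w \<longleftrightarrow>
     (\<forall>a b. a \<noteq> 0 \<longrightarrow> b \<noteq> 0 \<longrightarrow> w (a * b) = w a + w b) \<and>
     (\<forall>a b. a \<noteq> 0 \<longrightarrow> b \<noteq> 0 \<longrightarrow> a + b \<noteq> 0 \<longrightarrow> min (w a) (w b) \<le> w (a + b)) \<and>
     (\<forall>a\<in>k. a \<noteq> 0 \<longrightarrow> w a = 0) \<and>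
     (\<exists>t. t \<noteq> 0 \<and> w t = 1)"

definition same_place :: "('a::field \<Rightarrow> int) \<Rightarrow> ('a \<Rightarrow> int) \<Rightarrow> bool" where
  "same_place w u \<longleftrightarrow> (\<forall>a. a \<noteq> 0 \<longrightarrow> w a = u a)"

text \<open>Lower ramification group G_i = {sigma. v(sigma t - t) >= i+1}, t a uniformizer;
  sigma t = t is read as v(0) = infinity.\<close>
definition ram_group :: "('a::field \<Rightarrow> 'a) set \<Rightarrow> ('a \<Rightarrow> int) \<Rightarrow> nat \<Rightarrow> ('a \<Rightarrow> 'a) set" where
  "ram_group G v i = {\<sigma>\<in>G. \<forall>t. t \<noteq> 0 \<and> v t = 1 \<longrightarrow> \<sigma> t = t \<or> int i + 1 \<le> v (\<sigma> t - t)}"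

definition Fld :: "('a::field \<Rightarrow> 'a) set \<Rightarrow> ('a \<Rightarrow> int) \<Rightarrow> (nat \<Rightarrow> nat) \<Rightarrow> nat \<Rightarrow> nat \<Rightarrow> 'a set" where
  "Fld G v b h i = (if i < h then fixed_field (ram_group G v (b i)) else UNIV)"

definition additive_poly :: "nat \<Rightarrow> nat \<Rightarrow> (nat \<Rightarrow> 'a::field) \<Rightarrow> 'a \<Rightarrow> 'a poly" where
  "additive_poly p n a D = monom 1 (p ^ n) + (\<Sum>j<n. monom (a j) (p ^ j)) - [:D:]"

definition mon :: "'a::field \<Rightarrow> (nat \<Rightarrow> 'a) \<Rightarrow> nat \<Rightarrow> (nat \<Rightarrow> nat) \<Rightarrow> 'a" where
  "mon x fb i l = x ^ l 0 * (\<Prod>j\<in>{1..<i}. fb j ^ l j)"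

end

theory Submission
  imports Defs
begin

text \<open>Compute \<open>v(D_i)\<close> in two ways. From the minimal polynomial,
  \<open>D_i = f_i^(p^n_i) + a_(n_i-1) f_i^(p^(n_i-1)) + ... + a_0 f_i\<close>; as \<open>f_i\<close> has a pole
  at \<open>P\<close>, the leading power dominates and \<open>v(D_i) = p^n_i v(f_i) = -p^(n_i+...+n_(h-1)) b_i\<close>.
  From the expansion of \<open>D_i\<close>, whose monomials have pairwise distinct valuations,
  \<open>v(D_i) = v(min D_i)\<close>, which is linear in the exponents \<open>\<nu>_j\<close>. Since \<open>v(x) = -|G|\<close> and
  \<open>|G| = p^(n_1+...+n_(h-1))\<close> by counting through the ramification jumps, this value
  is also \<open>-p^(n_i+...+n_(h-1))\<close> times the claimed expression for \<open>b_i\<close>.\<close>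

lemma place_val_mult:
  "place k v \<Longrightarrow> a \<noteq> 0 \<Longrightarrow> b \<noteq> 0 \<Longrightarrow> v (a * b) = v a + v b"
  by (simp add: place_def)

lemma place_val_ultrametric:
  "place k v \<Longrightarrow> a \<noteq> 0 \<Longrightarrow> b \<noteq> 0 \<Longrightarrow> a + b \<noteq> 0 \<Longrightarrow> min (v a) (v b) \<le> v (a + b)"
  by (simp add: place_def)

lemma place_val_const: "place k v \<Longrightarrow> c \<in> k \<Longrightarrow> c \<noteq> 0 \<Longrightarrow> v c = 0"
  by (simp add: place_def)

lemma place_val_one: "place k v \<Longrightarrow> v (1::'a::field) = 0"
  using place_val_mult[of k v 1 1] by simp

lemma place_val_uminus:
  assumes "place k v" "(a::'a::field) \<noteq> 0"
  shows "v (- a) = v a"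
proof -
  have "v (-1::'a) + v (-1) = v 1"
    using place_val_mult[OF assms(1), of "-1" "-1"] by simp
  then have "v (-1::'a) = 0" using place_val_one[OF assms(1)] by simp
  then show ?thesis using place_val_mult[OF assms(1), of "-1" a] assms(2) by simp
qed

lemma place_val_power:
  assumes "place k v" "(a::'a::field) \<noteq> 0"
  shows "v (a ^ m) = int m * v a"
proof (induction m)
  case (Suc m)
  then show ?case using place_val_mult[OF assms(1,2), of "a ^ m"] assms(2) by (simp add: algebra_simps)
qed (simp add: place_val_one[OF assms(1)])

lemma place_val_prod:
  assumes "place k v" "finite A" "\<forall>j\<in>A. f j \<noteq> (0::'a::field)"
  shows "v (prod f A) = (\<Sum>j\<in>A. v (f j))"
  using assms(2,3)
proof (induction A rule: finite_induct)
  case (insert j A)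
  then show ?case using place_val_mult[OF assms(1), of "f j" "prod f A"] by simp
qed (simp add: place_val_one[OF assms(1)])

lemma place_val_add_dominant:
  assumes pl: "place k v" and a: "(a::'a::field) \<noteq> 0" and r: "r \<noteq> 0" and lt: "v a < v r"
  shows "a + r \<noteq> 0 \<and> v (a + r) = v a"
proof -
  have ne: "a + r \<noteq> 0"
  proof
    assume "a + r = 0"
    then have "r = - a" by (simp add: eq_neg_iff_add_eq_0 add.commute)
    then show False using lt place_val_uminus[OF pl a] by simp
  qed
  have "v a \<le> v (a + r)" using place_val_ultrametric[OF pl a r ne] lt by simp
  moreover have "min (v (a + r)) (v (- r)) \<le> v a"
    using place_val_ultrametric[OF pl ne, of "- r"] r a by simp
  ultimately show ?thesis using ne place_val_uminus[OF pl r] lt by linarith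
qed

lemma place_val_sum_gt:
  assumes pl: "place k v" and "finite A"
    and "\<forall>j\<in>A. f j \<noteq> 0 \<longrightarrow> V < v (f j)" and "sum f A \<noteq> (0::'a::field)"
  shows "V < v (sum f A)"
  using assms(2-)
proof (induction A rule: finite_induct)
  case (insert j A)
  show ?case
  proof (cases "f j = 0 \<or> sum f A = 0")
    case False
    then show ?thesis using insert place_val_ultrametric[OF pl, of "f j" "sum f A"] by auto
  qed (use insert in auto)
qed simp

lemma place_val_add_sum_dominant:
  assumes pl: "place k v" and a: "(a::'a::field) \<noteq> 0" and "finite A"
    and gt: "\<forall>j\<in>A. f j \<noteq> 0 \<longrightarrow> v a < v (f j)"
  shows "v (a + sum f A) = v a"
proof (cases "sum f A = 0")
  case False
  then show ?thesis
    using place_val_add_dominant[OF pl a False] place_val_sum_gt[OF pl \<open>finite A\<close> gt] by simp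
qed simp

lemma place_val_sum_min_term:
  assumes pl: "place k v" and "finite S"
    and coeffs: "\<forall>l\<in>S. \<gamma> l \<in> k \<and> \<gamma> l \<noteq> 0" and nz: "\<forall>l\<in>S. f l \<noteq> (0::'a::field)"
    and distinct: "\<forall>l\<in>S. \<forall>l'\<in>S. l \<noteq> l' \<longrightarrow> v (f l) \<noteq> v (f l')"
    and "\<nu> \<in> S" and min: "\<forall>l\<in>S. v (f \<nu>) \<le> v (f l)"
  shows "v (\<Sum>l\<in>S. \<gamma> l * f l) = v (f \<nu>)"
proof -
  have val_term: "\<gamma> l * f l \<noteq> 0 \<and> v (\<gamma> l * f l) = v (f l)" if "l \<in> S" for l
    using that coeffs nz place_val_mult[OF pl] place_val_const[OF pl] by auto
  have "\<forall>l\<in>S - {\<nu>}. \<gamma> l * f l \<noteq> 0 \<longrightarrow> v (\<gamma> \<nu> * f \<nu>) < v (\<gamma> l * f l)"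
    using val_term \<open>\<nu> \<in> S\<close> min distinct by (metis DiffE insertI1 order_le_neq_trans)
  then have "v (\<gamma> \<nu> * f \<nu> + (\<Sum>l\<in>S - {\<nu>}. \<gamma> l * f l)) = v (\<gamma> \<nu> * f \<nu>)"
    using val_term[OF \<open>\<nu> \<in> S\<close>] \<open>finite S\<close> by (intro place_val_add_sum_dominant[OF pl]) auto
  then have "v (\<gamma> \<nu> * f \<nu> + (\<Sum>l\<in>S - {\<nu>}. \<gamma> l * f l)) = v (f \<nu>)"
    using val_term[OF \<open>\<nu> \<in> S\<close>] by simp
  then show ?thesis using \<open>finite S\<close> \<open>\<nu> \<in> S\<close> by (simp add: sum.remove)
qed

lemma place_val_additive_poly_root:
  assumes pl: "place k v" and "1 < p" and y: "(y::'a::field) \<noteq> 0" "v y < 0"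
    and coeffs: "\<forall>j<m. c j \<in> k" and root: "poly (additive_poly p m c D) y = 0"
  shows "v D = int (p ^ m) * v y"
proof -
  have D: "D = y ^ p ^ m + (\<Sum>j<m. c j * y ^ p ^ j)"
    using root by (simp add: additive_poly_def poly_monom poly_sum)
  have "v (y ^ p ^ m) < v (c j * y ^ p ^ j)" if "j < m" "c j \<noteq> 0" for j
  proof -
    have "int (p ^ m) * v y < int (p ^ j) * v y"
      using \<open>j < m\<close> \<open>1 < p\<close> \<open>v y < 0\<close> by (simp add: power_strict_increasing)
    then show ?thesis
      using that coeffs y place_val_mult[OF pl] place_val_const[OF pl] place_val_power[OF pl] by simp
  qed
  then have "v D = v (y ^ p ^ m)"
    unfolding D using y by (intro place_val_add_sum_dominant[OF pl]) auto
  then show ?thesis using place_val_power[OF pl y(1)] by simp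
qed

text \<open>The common factor \<open>c\<close> is \<open>p^(n_i+...+n_(h-1))\<close> in the application, where it is
  cancelled against the same factor in \<open>p^n_i v(f_i)\<close>.\<close>

lemma place_val_mon:
  assumes pl: "place k v" and "x \<noteq> 0" and nz: "\<forall>j\<in>{1..<i}. fb j \<noteq> 0"
    and vx: "v x = - int (c * q\<^sub>0)" and vfb: "\<forall>j\<in>{1..<i}. v (fb j) = - int (c * q j)"
  shows "v (mon x fb i l) = - int (c * (l 0 * q\<^sub>0 + (\<Sum>j\<in>{1..<i}. l j * q j)))"
proof -
  have "v (\<Prod>j\<in>{1..<i}. fb j ^ l j) = (\<Sum>j\<in>{1..<i}. v (fb j ^ l j))"
    using nz by (intro place_val_prod[OF pl]) auto
  also have "\<dots> = (\<Sum>j\<in>{1..<i}. int (l j) * v (fb j))"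
    using nz place_val_power[OF pl] by (intro sum.cong) auto
  finally have "v (mon x fb i l) = int (l 0) * v x + (\<Sum>j\<in>{1..<i}. int (l j) * v (fb j))"
    unfolding mon_def using \<open>x \<noteq> 0\<close> nz place_val_mult[OF pl] place_val_power[OF pl] by simp
  also have "\<dots> = - int (c * (l 0 * q\<^sub>0 + (\<Sum>j\<in>{1..<i}. l j * q j)))"
    using vx vfb by (simp add: algebra_simps sum_distrib_left sum_negf)
  finally show ?thesis .
qed

lemma transcendental_over_nonzero:
  assumes "subfield k" "transcendental_over k x"
  shows "x \<noteq> 0"
proof -
  have "poly_over k [:0, 1:]"
    using assms(1) by (auto simp: poly_over_def subfield_def coeff_pCons split: nat.splits)
  then show ?thesis using assms(2) by (auto simp: transcendental_over_def)
qed

lemma ram_group_Suc_subset: "ram_group G v (Suc j) \<subseteq> ram_group G v j"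
  unfolding ram_group_def by force

lemma ram_group_subset: "ram_group G v j \<subseteq> G"
  unfolding ram_group_def by auto

lemma ram_group_below_first_jump:
  fixes b :: "nat \<Rightarrow> nat" and h :: nat
  assumes G1: "ram_group G v 1 = G"
    and jumps: "{j. ram_group G v j \<noteq> ram_group G v (Suc j)} = b ` {1..h-1}"
    and mono: "\<forall>j l. 1 \<le> j \<and> j < l \<and> l \<le> h - 1 \<longrightarrow> b j < b l"
    and "j \<le> b 1"
  shows "ram_group G v j = G"
  using \<open>j \<le> b 1\<close>
proof (induction j)
  case 0
  show ?case using ram_group_subset[of G v 0] ram_group_Suc_subset[of G v 0] G1 by auto
next
  case (Suc j)
  have "ram_group G v j = ram_group G v (Suc j)"
  proof (rule ccontr)
    assume "ram_group G v j \<noteq> ram_group G v (Suc j)"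
    then have "j \<in> b ` {1..h-1}" using jumps by blast
    then obtain l where "1 \<le> l" "l \<le> h - 1" "j = b l" by auto
    then have "b 1 \<le> j" using mono by (cases "l = 1") (auto intro: less_imp_le)
    then show False using Suc.prems by simp
  qed
  then show ?case using Suc by simp
qed

lemma power_sum_telescope:
  fixes c :: "nat \<Rightarrow> nat"
  assumes step: "\<And>j. a \<le> j \<Longrightarrow> j < m \<Longrightarrow> c j = p ^ n j * c (Suc j)"
    and last: "c m = p ^ n m" and "a \<le> m"
  shows "c a = p ^ (\<Sum>l\<in>{a..m}. n l)"
  using \<open>a \<le> m\<close>
proof (induction a rule: inc_induct)
  case (step j)
  then show ?case using assms(1) by (simp add: sum.atLeast_Suc_atMost power_add)
qed (simp add: last)

lemma card_eq_power_sum_jump_indices: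
  fixes b :: "nat \<Rightarrow> nat" and h p :: nat
  assumes G1: "ram_group G v 1 = G"
    and jumps: "{j. ram_group G v j \<noteq> ram_group G v (Suc j)} = b ` {1..h-1}"
    and mono: "\<forall>j l. 1 \<le> j \<and> j < l \<and> l \<le> h - 1 \<longrightarrow> b j < b l"
    and idx: "\<forall>j. 1 \<le> j \<and> j < h - 1 \<longrightarrow>
                card (ram_group G v (b j)) = p ^ n j * card (ram_group G v (b (Suc j)))"
    and idx_last: "card (ram_group G v (b (h - 1))) = p ^ n (h - 1)"
    and "1 \<le> h - 1"
  shows "card G = p ^ (\<Sum>l\<in>{1..h-1}. n l)"
proof -
  have "card (ram_group G v (b 1)) = p ^ (\<Sum>l\<in>{1..h-1}. n l)"
    using idx idx_last \<open>1 \<le> h - 1\<close> by (intro power_sum_telescope) auto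
  then show ?thesis using ram_group_below_first_jump[OF G1 jumps mono order.refl] by simp
qed

theorem mainTheorem2:
  fixes k :: "'a::field set" and x :: 'a and p :: nat
    and G :: "('a \<Rightarrow> 'a) set" and v :: "'a \<Rightarrow> int"
    and h :: nat and b :: "nat \<Rightarrow> nat" and n :: "nat \<Rightarrow> nat"
    and fbar :: "nat \<Rightarrow> 'a" and a :: "nat \<Rightarrow> nat \<Rightarrow> 'a" and D :: "nat \<Rightarrow> 'a"
    and S :: "nat \<Rightarrow> (nat \<Rightarrow> nat) set" and \<gamma> :: "nat \<Rightarrow> (nat \<Rightarrow> nat) \<Rightarrow> 'a"
    and \<nu> :: "nat \<Rightarrow> nat" and i :: nat
  assumes k_closed: "alg_closed_subfield k"
    and p_prime: "prime p" and p_ge: "5 \<le> p" and char_p: "of_nat p = (0::'a)"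
    and x_trans: "transcendental_over k x"
    \<comment> \<open>Galois cover X -> P^1 with group G, function fields F = 'a over k(x)\<close>
    and G_grp: "aut_group G"
    and G_fix_k: "\<forall>\<sigma>\<in>G. \<forall>c\<in>k. \<sigma> c = c"
    and G_fixed: "fixed_field G = gen_field (insert x k)"
    \<comment> \<open>G is a p-group\<close>
    and G_pgrp: "\<exists>N. card G = p ^ N"
    \<comment> \<open>P: the unique place over P_infinity, totally ramified\<close>
    and v_place: "place k v"
    and v_x: "v x = - int (card G)"
    and P_unique: "\<forall>w. place k w \<and> w x < 0 \<longrightarrow> same_place w v"
    \<comment> \<open>all other places of k(x) are unramified\<close>
    and unram: "\<forall>w. place k w \<and> 0 \<le> w x \<longrightarrow>
                   (\<exists>c\<in>gen_field (insert x k). c \<noteq> 0 \<and> w c = 1)"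
    \<comment> \<open>G equals its first ramification group\<close>
    and G1: "ram_group G v 1 = G"
    \<comment> \<open>jumps of the lower ramification filtration\<close>
    and b_mono: "\<forall>j l. 1 \<le> j \<and> j < l \<and> l \<le> h - 1 \<longrightarrow> b j < b l"
    and b_jumps: "{j. ram_group G v j \<noteq> ram_group G v (Suc j)} = b ` {1..h-1}"
    and idx: "\<forall>j. 1 \<le> j \<and> j < h - 1 \<longrightarrow>
                card (ram_group G v (b j)) = p ^ n j * card (ram_group G v (b (Suc j)))"
    and idx_last: "card (ram_group G v (b (h - 1))) = p ^ n (h - 1)"
    \<comment> \<open>the generators fbar_j and their minimal polynomials\<close>
    and fbar_in: "\<forall>j. 1 \<le> j \<and> j \<le> h - 1 \<longrightarrow> fbar j \<in> Fld G v b h (Suc j)"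
    and fbar_gen: "\<forall>j. 1 \<le> j \<and> j \<le> h - 1 \<longrightarrow>
                    gen_field (insert (fbar j) (Fld G v b h j)) = Fld G v b h (Suc j)"
    and fbar_nz: "\<forall>j. 1 \<le> j \<and> j \<le> h - 1 \<longrightarrow> fbar j \<noteq> 0"
    and fbar_pole: "\<forall>j w. 1 \<le> j \<and> j \<le> h - 1 \<and> place k w \<and> \<not> same_place w v \<longrightarrow> 0 \<le> w (fbar j)"
    and fbar_val: "\<forall>j. 1 \<le> j \<and> j \<le> h - 1 \<longrightarrow>
                    v (fbar j) = - int (p ^ (\<Sum>l\<in>{Suc j..h-1}. n l) * b j)"
    and a_in: "\<forall>j l. 1 \<le> j \<and> j \<le> h - 1 \<and> l < n j \<longrightarrow> a j l \<in> k"
    and D_in: "\<forall>j. 1 \<le> j \<and> j \<le> h - 1 \<longrightarrow> D j \<in> Fld G v b h j"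
    and minpoly_root: "\<forall>j. 1 \<le> j \<and> j \<le> h - 1 \<longrightarrow>
                    poly (additive_poly p (n j) (a j) (D j)) (fbar j) = 0"
    and minpoly_min: "\<forall>j q. 1 \<le> j \<and> j \<le> h - 1 \<and> q \<noteq> 0 \<and> poly_over (Fld G v b h j) q
                       \<and> poly q (fbar j) = 0 \<longrightarrow> p ^ n j \<le> degree q"
    \<comment> \<open>the index i and the expansion of D_i\<close>
    and i_range: "2 \<le> i" "i \<le> h - 1"
    and S_fin: "finite (S i)"
    and S_exps: "\<forall>l\<in>S i. (\<forall>j. 1 \<le> j \<and> j < i \<longrightarrow> l j < p ^ n j) \<and> (\<forall>j. i \<le> j \<longrightarrow> l j = 0)"
    and \<gamma>_in: "\<forall>l\<in>S i. \<gamma> i l \<in> k \<and> \<gamma> i l \<noteq> 0"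
    and D_expand: "D i = (\<Sum>l\<in>S i. \<gamma> i l * mon x fbar i l)"
    and S_distinct: "\<forall>l\<in>S i. \<forall>l'\<in>S i. l \<noteq> l' \<longrightarrow> v (mon x fbar i l) \<noteq> v (mon x fbar i l')"
    \<comment> \<open>min D_i = gamma_i(nu) x^{nu_0} fbar_1^{nu_1} ... fbar_{i-1}^{nu_{i-1}}\<close>
    and \<nu>_in: "\<nu> \<in> S i"
    and \<nu>_min: "\<forall>l\<in>S i. v (mon x fbar i \<nu>) \<le> v (mon x fbar i l)"
  shows "b i = \<nu> 0 * p ^ (\<Sum>j\<in>{1..<i}. n j)
              + (\<Sum>j\<in>{1..<i}. \<nu> j * p ^ (\<Sum>l\<in>{Suc j..<i}. n l) * b j)"
proof -
  define T where "T = (\<Sum>l\<in>{i..h-1}. n l)"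
  define R where "R = \<nu> 0 * p ^ (\<Sum>j\<in>{1..<i}. n j)
    + (\<Sum>j\<in>{1..<i}. \<nu> j * p ^ (\<Sum>l\<in>{Suc j..<i}. n l) * b j)"
  have x_nz: "x \<noteq> 0"
    using k_closed x_trans transcendental_over_nonzero by (auto simp: alg_closed_subfield_def)
  have fbar_nz': "\<forall>j\<in>{1..<i}. fbar j \<noteq> 0" using fbar_nz i_range by auto
  have split: "(\<Sum>l\<in>{j..h-1}. n l) = (\<Sum>l\<in>{j..<i}. n l) + T" if "j \<le> i" for j
    using that i_range sum.atLeastLessThan_concat[of j i h n]
    by (simp add: T_def atLeastLessThanSuc_atLeastAtMost[symmetric])
  have "card G = p ^ (\<Sum>l\<in>{1..h-1}. n l)"
    using i_range by (intro card_eq_power_sum_jump_indices[OF G1 b_jumps b_mono idx idx_last]) auto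
  then have vx: "v x = - int (p ^ T * p ^ (\<Sum>j\<in>{1..<i}. n j))"
    using v_x split[of 1] i_range by (simp add: power_add mult.commute)
  have vf: "\<forall>j\<in>{1..<i}. v (fbar j) = - int (p ^ T * (p ^ (\<Sum>l\<in>{Suc j..<i}. n l) * b j))"
    using fbar_val split i_range by (auto simp: power_add mult_ac)
  have "v (D i) = v (mon x fbar i \<nu>)"
    unfolding D_expand using x_nz fbar_nz'
    by (intro place_val_sum_min_term[OF v_place S_fin \<gamma>_in _ S_distinct \<nu>_in \<nu>_min])
      (auto simp: mon_def)
  also have "\<dots> = - int (p ^ T * R)"
    using place_val_mon[OF v_place x_nz fbar_nz' vx vf] by (simp add: R_def mult.assoc)
  finally have "v (D i) = - int (p ^ T * R)" .
  moreover have "v (D i) = - int (p ^ T * b i)"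
  proof -
    have "b 1 < b i" using b_mono i_range by auto
    moreover have "T = n i + (\<Sum>l\<in>{Suc i..h-1}. n l)"
      using i_range by (simp add: T_def sum.atLeast_Suc_atMost)
    ultimately show ?thesis
      using place_val_additive_poly_root[OF v_place _ _ _ _ minpoly_root[rule_format]]
        fbar_nz fbar_val a_in p_ge i_range by (auto simp: power_add)
  qed
  ultimately have "int (p ^ T * b i) = int (p ^ T * R)" by linarith
  then show ?thesis unfolding of_nat_eq_iff R_def using p_ge by simp
qed

end
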